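(* Let $X$ be a Banach space and $M,N:\Sigma\to cb(X)$ be $d_H$-multimeasures. Suppose there exists a bounded measurable $\theta:\Omega\to\mathbb R$ such that $\langle y',j\circ M(E)\rangle=\int_E\theta\,d\langle y',j\circ N\rangle$ for all $E\in\Sigma$ and all $y'\in\ell_\infty(B_{X'})'$. Then there exists $d>0$ such that for every $E\in\Sigma$ $$M(E)\subseteq d\,\overline{\mathrm{aco}}\big[\mathcal R(N_E)\cup\mathcal R(-N_E)\big].$$
   Context: $(\Omega,\Sigma)$ is a measurable space, $X$ a Banach space with dual unit ball $B_{X'}$. $cb(X)$: nonempty closed bounded convex subsets of $X$ with Hausdorff metric $d_H$; $s(x',C)=\sup\{\langle x',x\rangle:x\in C\}$. A $d_H$-multimeasure is $M:\Sigma\to cb(X)$ countably additive in $d_H$. $-N$: $E\mapsto\{-x:x\in N(E)\}$. Rådström embedding: $j(A)=s(\cdot,A)|_{B_{X'}}\in\ell_\infty(B_{X'})$. $\Sigma_E=\{F\in\Sigma:F\subseteq E\}$; $\mathcal R(N_E)=\{z\in X:\exists F\in\Sigma_E,\ z\in N(F)\}$, and similarly $\mathcal R(-N_E)$. $\overline{\mathrm{aco}}$ denotes the closed absolutely convex hull in $X$. *)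

theory Defs
  imports "HOL-Analysis.Analysis"
begin

definition hausdorff_dist :: "'a::metric_space set \<Rightarrow> 'a set \<Rightarrow> real" where
  "hausdorff_dist A B = max (SUP a\<in>A. infdist a B) (SUP b\<in>B. infdist b A)"

definition cb :: "'x::real_normed_vector set set" where
  "cb = {C. C \<noteq> {} \<and> closed C \<and> bounded C \<and> convex C}"

definition msum :: "('a set \<Rightarrow> 'x::real_normed_vector set) \<Rightarrow> (nat \<Rightarrow> 'a set) \<Rightarrow> nat \<Rightarrow> 'x set" where
  "msum M F n = {(\<Sum>i<n. x i) | x. \<forall>i<n. x i \<in> M (F i)}"

definition dH_multimeasure :: "'a measure \<Rightarrow> ('a set \<Rightarrow> 'x::real_normed_vector set) \<Rightarrow> bool" where
  "dH_multimeasure S M \<longleftrightarrow>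
     (\<forall>E\<in>sets S. M E \<in> cb) \<and>
     (\<forall>F::nat \<Rightarrow> 'a set. range F \<subseteq> sets S \<longrightarrow> disjoint_family F \<longrightarrow>
        (\<lambda>n. hausdorff_dist (msum M F n) (M (\<Union>i. F i))) \<longlonglongrightarrow> 0)"

definition neg_mm :: "('a set \<Rightarrow> 'x::real_normed_vector set) \<Rightarrow> 'a set \<Rightarrow> 'x set" where
  "neg_mm N E = uminus ` N E"

definition supp_fun :: "('x::real_normed_vector \<Rightarrow>\<^sub>L real) \<Rightarrow> 'x set \<Rightarrow> real" where
  "supp_fun x' C = (SUP x\<in>C. blinfun_apply x' x)"

text \<open>The space l_infinity(B_X'), realised as the bounded real functions on the dual space
  that vanish outside the dual unit ball B_X'.\<close>
definition linf_ball :: "(('x::real_normed_vector \<Rightarrow>\<^sub>L real) \<Rightarrow> real) set" where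
  "linf_ball = {g. (\<forall>x'. 1 < norm x' \<longrightarrow> g x' = 0) \<and> bounded (range g)}"

definition radstroem :: "'x::real_normed_vector set \<Rightarrow> ('x \<Rightarrow>\<^sub>L real) \<Rightarrow> real" where
  "radstroem A = (\<lambda>x'. if norm x' \<le> 1 then supp_fun x' A else 0)"

text \<open>Elements of the dual l_infinity(B_X')': bounded linear functionals on linf_ball
  (values outside linf_ball are irrelevant).\<close>
definition linf_dual :: "((('x::real_normed_vector \<Rightarrow>\<^sub>L real) \<Rightarrow> real) \<Rightarrow> real) set" where
  "linf_dual = {y. (\<forall>g\<in>linf_ball. \<forall>h\<in>linf_ball. y (\<lambda>x'. g x' + h x') = y g + y h) \<and>
                  (\<forall>c. \<forall>g\<in>linf_ball. y (\<lambda>x'. c * g x') = c * y g) \<and>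
                  (\<exists>K. \<forall>g\<in>linf_ball. \<bar>y g\<bar> \<le> K * (SUP x'. \<bar>g x'\<bar>))}"

definition pos_var :: "'a measure \<Rightarrow> ('a set \<Rightarrow> real) \<Rightarrow> 'a set \<Rightarrow> real" where
  "pos_var S \<nu> E = (SUP F\<in>{F\<in>sets S. F \<subseteq> E}. \<nu> F)"

definition neg_var :: "'a measure \<Rightarrow> ('a set \<Rightarrow> real) \<Rightarrow> 'a set \<Rightarrow> real" where
  "neg_var S \<nu> E = (SUP F\<in>{F\<in>sets S. F \<subseteq> E}. - \<nu> F)"

definition signed_integral :: "'a measure \<Rightarrow> ('a set \<Rightarrow> real) \<Rightarrow> 'a set \<Rightarrow> ('a \<Rightarrow> real) \<Rightarrow> real" where
  "signed_integral S \<nu> E \<theta> =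
     (\<integral>\<omega>. indicator E \<omega> * \<theta> \<omega> \<partial>(measure_of (space S) (sets S) (\<lambda>A. ennreal (pos_var S \<nu> A))))
   - (\<integral>\<omega>. indicator E \<omega> * \<theta> \<omega> \<partial>(measure_of (space S) (sets S) (\<lambda>A. ennreal (neg_var S \<nu> A))))"

definition range_on :: "'a measure \<Rightarrow> ('a set \<Rightarrow> 'x set) \<Rightarrow> 'a set \<Rightarrow> 'x set" where
  "range_on S N E = {z. \<exists>F\<in>sets S. F \<subseteq> E \<and> z \<in> N F}"

definition absolutely_convex :: "'x::real_vector set \<Rightarrow> bool" where
  "absolutely_convex C \<longleftrightarrow> convex C \<and> (\<forall>x\<in>C. \<forall>t::real. \<bar>t\<bar> \<le> 1 \<longrightarrow> t *\<^sub>R x \<in> C)"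

definition closed_aco :: "'x::real_normed_vector set \<Rightarrow> 'x set" where
  "closed_aco A = closure (absolutely_convex hull A)"

end

theory Submission
  imports Defs
begin

text \<open>Let \<open>c\<close> bound \<open>|\<theta>|\<close> and \<open>d = 2 c + 1\<close>. If \<open>x \<in> M(E)\<close> lay outside
  \<open>d K\<close>, \<open>K\<close> the closed absolutely convex hull, Hahn--Banach (applied to the Minkowski
  functional of \<open>K\<close> thickened by a ball) would give a functional \<open>f\<close> with \<open>|f| \<le> 1\<close> on \<open>K\<close>
  and \<open>f x \<ge> d\<close>. Testing the representation with the point evaluation at \<open>f / \<parallel>f\<parallel>\<close>
  turns it into \<open>s(f, M(E)) = \<integral>\<^sub>E \<theta> d\<langle>f, N\<rangle>\<close>; as \<open>|s(f, N(F))| \<le> 1\<close> for \<open>F \<subseteq> E\<close>,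
  both variations of \<open>\<langle>f, N\<rangle>\<close> on \<open>E\<close> are at most \<open>1\<close>, whence \<open>f x \<le> 2 c < d\<close>.\<close>

section \<open>Hahn--Banach for sublinear functionals\<close>

definition sublinear :: "('x::real_vector \<Rightarrow> real) \<Rightarrow> bool" where
  "sublinear p \<longleftrightarrow>
     (\<forall>u v. p (u + v) \<le> p u + p v) \<and> (\<forall>t u. 0 \<le> t \<longrightarrow> p (t *\<^sub>R u) = t * p u)"

lemma sublinear_add_le: "sublinear p \<Longrightarrow> p (u + v) \<le> p u + p v"
  unfolding sublinear_def by blast

lemma sublinear_scaleR: "sublinear p \<Longrightarrow> 0 \<le> t \<Longrightarrow> p (t *\<^sub>R u) = t * p u"
  unfolding sublinear_def by blast

lemma sublinear_zero: "sublinear p \<Longrightarrow> p 0 = 0"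
  using sublinear_scaleR[of p 0 0] by simp

lemma sublinear_uminus_ge: "sublinear p \<Longrightarrow> - p u \<le> p (- u)"
  using sublinear_add_le[of p u "- u"] sublinear_zero[of p] by simp

definition dominated_linear_graph :: "('x::real_vector \<Rightarrow> real) \<Rightarrow> ('x \<times> real) set \<Rightarrow> bool" where
  "dominated_linear_graph p G \<longleftrightarrow> (0, 0) \<in> G \<and>
     (\<forall>v a w b. (v, a) \<in> G \<longrightarrow> (w, b) \<in> G \<longrightarrow> (v + w, a + b) \<in> G) \<and>
     (\<forall>t v a. (v, a) \<in> G \<longrightarrow> (t *\<^sub>R v, t * a) \<in> G) \<and>
     (\<forall>v a. (v, a) \<in> G \<longrightarrow> a \<le> p v)"

lemma
  assumes "dominated_linear_graph p G"
  shows dominated_linear_graph_zero: "(0, 0) \<in> G"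
    and dominated_linear_graph_add: "(v, a) \<in> G \<Longrightarrow> (w, b) \<in> G \<Longrightarrow> (v + w, a + b) \<in> G"
    and dominated_linear_graph_scaleR: "(v, a) \<in> G \<Longrightarrow> (t *\<^sub>R v, t * a) \<in> G"
    and dominated_linear_graph_le: "(v, a) \<in> G \<Longrightarrow> a \<le> p v"
  using assms unfolding dominated_linear_graph_def by simp_all

lemma dominated_linear_graph_unique:
  assumes p: "sublinear p" and G: "dominated_linear_graph p G"
    and "(v, a) \<in> G" "(v, b) \<in> G"
  shows "a = b"
proof -
  have "(v + (-1) *\<^sub>R v, a + (-1) * b) \<in> G" "(v + (-1) *\<^sub>R v, b + (-1) * a) \<in> G"
    using assms(3,4)
    by (simp_all only: dominated_linear_graph_add[OF G] dominated_linear_graph_scaleR[OF G])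
  then have "a - b \<le> p 0" "b - a \<le> p 0"
    using dominated_linear_graph_le[OF G] by fastforce+
  then show ?thesis using sublinear_zero[OF p] by simp
qed

lemma dominated_linear_graph_line:
  assumes p: "sublinear p"
  shows "dominated_linear_graph p (range (\<lambda>t. (t *\<^sub>R x, t * p x)))"
  unfolding dominated_linear_graph_def
proof (intro conjI allI impI)
  show "(0, 0) \<in> range (\<lambda>t. (t *\<^sub>R x, t * p x))"
    by (rule range_eqI[of _ _ 0]) simp
next
  fix v a w b assume "(v, a) \<in> range (\<lambda>t. (t *\<^sub>R x, t * p x))"
    "(w, b) \<in> range (\<lambda>t. (t *\<^sub>R x, t * p x))"
  then obtain s t where "v = s *\<^sub>R x" "a = s * p x" "w = t *\<^sub>R x" "b = t * p x"
    by auto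
  then show "(v + w, a + b) \<in> range (\<lambda>t. (t *\<^sub>R x, t * p x))"
    by (intro range_eqI[of _ _ "s + t"]) (simp add: algebra_simps)
next
  fix s v a assume "(v, a) \<in> range (\<lambda>t. (t *\<^sub>R x, t * p x))"
  then obtain t where "v = t *\<^sub>R x" "a = t * p x" by auto
  then show "(s *\<^sub>R v, s * a) \<in> range (\<lambda>t. (t *\<^sub>R x, t * p x))"
    by (intro range_eqI[of _ _ "s * t"]) simp
next
  fix v a assume "(v, a) \<in> range (\<lambda>t. (t *\<^sub>R x, t * p x))"
  then obtain t where t: "v = t *\<^sub>R x" "a = t * p x" by auto
  show "a \<le> p v"
  proof (cases "0 \<le> t")
    case False
    then have "t * p x \<le> (- t) * p (- x)"
      using sublinear_uminus_ge[OF p, of x] mult_left_mono[of "- p x" "p (- x)" "- t"]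
      by simp
    then show ?thesis using t False sublinear_scaleR[OF p, of "- t" "- x"] by simp
  qed (use t sublinear_scaleR[OF p] in simp)
qed

lemma dominated_linear_graph_Union:
  assumes "C \<noteq> {}" and good: "\<And>G. G \<in> C \<Longrightarrow> dominated_linear_graph p G"
    and chain: "\<And>G H. G \<in> C \<Longrightarrow> H \<in> C \<Longrightarrow> G \<subseteq> H \<or> H \<subseteq> G"
  shows "dominated_linear_graph p (\<Union>C)"
  unfolding dominated_linear_graph_def
proof (intro conjI allI impI)
  show "(0, 0) \<in> \<Union>C" using assms(1) dominated_linear_graph_zero[OF good] by blast
next
  fix v a w b assume "(v, a) \<in> \<Union>C" "(w, b) \<in> \<Union>C"
  then obtain G H where GH: "G \<in> C" "H \<in> C" "(v, a) \<in> G" "(w, b) \<in> H" by blast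
  show "(v + w, a + b) \<in> \<Union>C"
  proof (cases "G \<subseteq> H")
    case True
    then show ?thesis using GH dominated_linear_graph_add[OF good[of H]] by blast
  next
    case False
    then show ?thesis using GH chain[of G H] dominated_linear_graph_add[OF good[of G]] by blast
  qed
next
  fix t v a assume "(v, a) \<in> \<Union>C"
  then show "(t *\<^sub>R v, t * a) \<in> \<Union>C" using dominated_linear_graph_scaleR[OF good] by blast
next
  fix v a assume "(v, a) \<in> \<Union>C"
  then show "a \<le> p v" using dominated_linear_graph_le[OF good] by blast
qed

text \<open>The one-step extension of Hahn--Banach: sublinearity gives
  \<open>a - p (v - z) \<le> p (w + z) - b\<close>, so a value at \<open>z\<close> fits in between.\<close>
lemma dominated_linear_graph_extension_value:
  assumes p: "sublinear p" and G: "dominated_linear_graph p G"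
  obtains c where "\<And>v a. (v, a) \<in> G \<Longrightarrow> a - p (v - z) \<le> c"
    and "\<And>w b. (w, b) \<in> G \<Longrightarrow> c \<le> p (w + z) - b"
proof -
  define L where "L = {a - p (v - z) | v a. (v, a) \<in> G}"
  define U where "U = {p (w + z) - b | w b. (w, b) \<in> G}"
  have LU: "l \<le> u" if lu: "l \<in> L" "u \<in> U" for l u
  proof -
    obtain v a w b where l: "l = a - p (v - z)" "(v, a) \<in> G"
      and u: "u = p (w + z) - b" "(w, b) \<in> G"
      using lu unfolding L_def U_def by blast
    have "a + b \<le> p ((v - z) + (w + z))"
      using dominated_linear_graph_le[OF G dominated_linear_graph_add[OF G l(2) u(2)]] by simp
    also have "\<dots> \<le> p (v - z) + p (w + z)" by (rule sublinear_add_le[OF p])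
    finally show ?thesis using l u by simp
  qed
  have "0 - p (0 - z) \<in> L" and zU: "p (0 + z) - 0 \<in> U"
    using dominated_linear_graph_zero[OF G] unfolding L_def U_def by blast+
  then have "L \<noteq> {}" by blast
  moreover have "bdd_above L"
    using LU[OF _ zU] by (rule bdd_aboveI)
  ultimately have "\<And>l. l \<in> L \<Longrightarrow> l \<le> Sup L" "\<And>u. u \<in> U \<Longrightarrow> Sup L \<le> u"
    using LU by (meson cSup_least cSup_upper)+
  then show ?thesis
    by (intro that[of "Sup L"]) (auto simp: L_def U_def)
qed

lemma dominated_linear_graph_extension_le:
  assumes p: "sublinear p" and G: "dominated_linear_graph p G"
    and lower: "\<And>v a. (v, a) \<in> G \<Longrightarrow> a - p (v - z) \<le> c"
    and upper: "\<And>w b. (w, b) \<in> G \<Longrightarrow> c \<le> p (w + z) - b"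
    and va: "(v, a) \<in> G"
  shows "a + t * c \<le> p (v + t *\<^sub>R z)"
proof (cases t "0::real" rule: linorder_cases)
  case less
  have "inverse (- t) * a - p (inverse (- t) *\<^sub>R v - z) \<le> c"
    using lower[OF dominated_linear_graph_scaleR[OF G va]] .
  then have "(- t) * (inverse (- t) * a - p (inverse (- t) *\<^sub>R v - z)) \<le> (- t) * c"
    using less by (intro mult_left_mono) auto
  moreover have "(- t) *\<^sub>R (inverse (- t) *\<^sub>R v - z) = v + t *\<^sub>R z"
    using less by (simp add: scaleR_diff_right)
  then have "(- t) * p (inverse (- t) *\<^sub>R v - z) = p (v + t *\<^sub>R z)"
    using sublinear_scaleR[OF p, of "- t" "inverse (- t) *\<^sub>R v - z"] less by simp
  ultimately show ?thesis using less by (simp add: right_diff_distrib mult.assoc[symmetric])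
next
  case greater
  have "c \<le> p (inverse t *\<^sub>R v + z) - inverse t * a"
    using upper[OF dominated_linear_graph_scaleR[OF G va]] .
  then have "t * c \<le> t * (p (inverse t *\<^sub>R v + z) - inverse t * a)"
    using greater by (intro mult_left_mono) auto
  moreover have "t *\<^sub>R (inverse t *\<^sub>R v + z) = v + t *\<^sub>R z"
    using greater by (simp add: scaleR_add_right)
  then have "t * p (inverse t *\<^sub>R v + z) = p (v + t *\<^sub>R z)"
    using sublinear_scaleR[OF p, of t "inverse t *\<^sub>R v + z"] greater by simp
  ultimately show ?thesis using greater by (simp add: right_diff_distrib mult.assoc[symmetric])
qed (use dominated_linear_graph_le[OF G va] in simp)

lemma dominated_linear_graph_extend:
  assumes p: "sublinear p" and G: "dominated_linear_graph p G"
  shows "\<exists>c. dominated_linear_graph p {(v + t *\<^sub>R z, a + t * c) | v a t. (v, a) \<in> G}"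
proof -
  obtain c where lower: "\<And>v a. (v, a) \<in> G \<Longrightarrow> a - p (v - z) \<le> c"
    and upper: "\<And>w b. (w, b) \<in> G \<Longrightarrow> c \<le> p (w + z) - b"
    using dominated_linear_graph_extension_value[OF p G] by blast
  show ?thesis
    unfolding dominated_linear_graph_def
  proof (intro exI[of _ c] conjI allI impI)
    show "(0, 0) \<in> {(v + t *\<^sub>R z, a + t * c) | v a t. (v, a) \<in> G}"
      using dominated_linear_graph_zero[OF G] by force
  next
    fix v a w b
    assume "(v, a) \<in> {(v + t *\<^sub>R z, a + t * c) | v a t. (v, a) \<in> G}"
      "(w, b) \<in> {(v + t *\<^sub>R z, a + t * c) | v a t. (v, a) \<in> G}"
    then obtain v1 a1 t1 v2 a2 t2 where "(v1, a1) \<in> G" "(v2, a2) \<in> G"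
      "v = v1 + t1 *\<^sub>R z" "a = a1 + t1 * c" "w = v2 + t2 *\<^sub>R z" "b = a2 + t2 * c"
      by blast
    then show "(v + w, a + b) \<in> {(v + t *\<^sub>R z, a + t * c) | v a t. (v, a) \<in> G}"
      using dominated_linear_graph_add[OF G]
      by (intro CollectI exI[of _ "v1 + v2"] exI[of _ "a1 + a2"] exI[of _ "t1 + t2"])
        (simp add: algebra_simps)
  next
    fix s v a
    assume "(v, a) \<in> {(v + t *\<^sub>R z, a + t * c) | v a t. (v, a) \<in> G}"
    then obtain v1 a1 t where "(v1, a1) \<in> G" "v = v1 + t *\<^sub>R z" "a = a1 + t * c"
      by blast
    then show "(s *\<^sub>R v, s * a) \<in> {(v + t *\<^sub>R z, a + t * c) | v a t. (v, a) \<in> G}"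
      using dominated_linear_graph_scaleR[OF G]
      by (intro CollectI exI[of _ "s *\<^sub>R v1"] exI[of _ "s * a1"] exI[of _ "s * t"])
        (simp add: algebra_simps)
  next
    fix v a
    assume "(v, a) \<in> {(v + t *\<^sub>R z, a + t * c) | v a t. (v, a) \<in> G}"
    then show "a \<le> p v"
      using dominated_linear_graph_extension_le[OF p G lower upper] by blast
  qed
qed

lemma maximal_dominated_linear_graph_total:
  assumes p: "sublinear p" and G: "dominated_linear_graph p G"
    and max: "\<And>H. dominated_linear_graph p H \<Longrightarrow> G \<subseteq> H \<Longrightarrow> H = G"
  shows "\<exists>a. (z, a) \<in> G"
proof -
  obtain c where "dominated_linear_graph p {(v + t *\<^sub>R z, a + t * c) | v a t. (v, a) \<in> G}"
    using dominated_linear_graph_extend[OF p G] by blast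
  moreover define H where "H = {(v + t *\<^sub>R z, a + t * c) | v a t. (v, a) \<in> G}"
  ultimately have "H = G"
    by (intro max) (force simp: H_def intro: exI[of _ "0::real"])+
  moreover have "(0 + 1 *\<^sub>R z, 0 + 1 * c) \<in> H"
    unfolding H_def using dominated_linear_graph_zero[OF G] by blast
  ultimately show ?thesis by auto
qed

lemma maximal_dominated_linear_graph_exists:
  assumes G0: "dominated_linear_graph p G0"
  obtains G where "dominated_linear_graph p G" "G0 \<subseteq> G"
    "\<And>H. dominated_linear_graph p H \<Longrightarrow> G \<subseteq> H \<Longrightarrow> H = G"
proof -
  define A where "A = {G. dominated_linear_graph p G \<and> G0 \<subseteq> G}"
  have "\<exists>G\<in>A. \<forall>H\<in>A. G \<subseteq> H \<longrightarrow> H = G"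
  proof (rule subset_Zorn_nonempty)
    show "A \<noteq> {}" using G0 unfolding A_def by blast
  next
    fix C assume C: "C \<noteq> {}" "subset.chain A C"
    then have CA: "C \<subseteq> A" and chain: "\<And>G H. G \<in> C \<Longrightarrow> H \<in> C \<Longrightarrow> G \<subseteq> H \<or> H \<subseteq> G"
      unfolding subset_chain_def by auto
    have "dominated_linear_graph p (\<Union>C)"
      using CA by (intro dominated_linear_graph_Union[OF C(1) _ chain]) (auto simp: A_def)
    moreover have "G0 \<subseteq> \<Union>C" using C(1) CA unfolding A_def by blast
    ultimately show "\<Union>C \<in> A" unfolding A_def by blast
  qed
  then obtain G where "G \<in> A" and max: "\<forall>H\<in>A. G \<subseteq> H \<longrightarrow> H = G" ..
  then have G: "dominated_linear_graph p G" "G0 \<subseteq> G" unfolding A_def by simp_all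
  show ?thesis
  proof (rule that[OF G])
    fix H assume "dominated_linear_graph p H" "G \<subseteq> H"
    then have "H \<in> A" using G(2) unfolding A_def by auto
    then show "H = G" using max \<open>G \<subseteq> H\<close> by blast
  qed
qed

lemma total_dominated_linear_graph_bounded_linear:
  fixes p :: "'x::real_normed_vector \<Rightarrow> real"
  assumes p: "sublinear p" and bound: "\<And>u. p u \<le> K * norm u"
    and G: "dominated_linear_graph p G" and total: "\<And>v. \<exists>a. (v, a) \<in> G"
  obtains g where "bounded_linear g" "\<And>v. g v \<le> p v" "\<And>v a. (v, a) \<in> G \<Longrightarrow> g v = a"
proof -
  define g where "g v = (THE a. (v, a) \<in> G)" for v
  have "\<exists>!a. (v, a) \<in> G" for v
    using total dominated_linear_graph_unique[OF p G] by blast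
  then have gG: "(v, g v) \<in> G" for v
    unfolding g_def by (rule theI')
  have g_eq: "g v = a" if "(v, a) \<in> G" for v a
    using dominated_linear_graph_unique[OF p G gG that] .
  have g_le: "g v \<le> p v" for v
    using dominated_linear_graph_le[OF G gG] .
  have g_add: "g (u + v) = g u + g v" for u v
    using g_eq[OF dominated_linear_graph_add[OF G gG gG]] .
  have g_scale: "g (t *\<^sub>R v) = t * g v" for t v
    using g_eq[OF dominated_linear_graph_scaleR[OF G gG]] .
  have "\<bar>g v\<bar> \<le> norm v * K" for v
  proof -
    have "g (- v) = - g v" using g_scale[of "-1" v] by simp
    then show ?thesis
      using g_le[of v] g_le[of "- v"] bound[of v] bound[of "- v"]
      by (simp add: abs_le_iff mult.commute)
  qed
  then have "bounded_linear g"
    by (intro bounded_linear_intro[where K = K]) (auto simp: g_add g_scale)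
  then show ?thesis using that g_le g_eq by blast
qed

theorem hahn_banach_sublinear:
  fixes p :: "'x::real_normed_vector \<Rightarrow> real"
  assumes p: "sublinear p" and bound: "\<And>u. p u \<le> K * norm u"
  obtains g where "bounded_linear g" "\<And>v. g v \<le> p v" "g x = p x"
proof -
  obtain G where G: "dominated_linear_graph p G" "range (\<lambda>t. (t *\<^sub>R x, t * p x)) \<subseteq> G"
    and max: "\<And>H. dominated_linear_graph p H \<Longrightarrow> G \<subseteq> H \<Longrightarrow> H = G"
    using maximal_dominated_linear_graph_exists[OF dominated_linear_graph_line[OF p]] by blast
  obtain g where g: "bounded_linear g" "\<And>v. g v \<le> p v" "\<And>v a. (v, a) \<in> G \<Longrightarrow> g v = a"
    using total_dominated_linear_graph_bounded_linear[OF p bound G(1)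
        maximal_dominated_linear_graph_total[OF p G(1) max]] by blast
  have "(x, p x) \<in> G" using G(2) rangeI[of "\<lambda>t. (t *\<^sub>R x, t * p x)" 1] by auto
  then show ?thesis using that g by blast
qed

section \<open>Separation from closed absolutely convex sets\<close>

text \<open>The Minkowski functional of \<open>C + ball 0 r\<close>.\<close>
definition thickened_gauge :: "'x::real_normed_vector set \<Rightarrow> real \<Rightarrow> 'x \<Rightarrow> real" where
  "thickened_gauge C r v = Inf {l. 0 < l \<and> (\<exists>c\<in>C. norm (v - l *\<^sub>R c) < l * r)}"

context
  fixes C :: "'x::real_normed_vector set" and r :: real
  assumes C0: "0 \<in> C" and r: "0 < r"
begin

lemma thickened_gauge_le:
  assumes "0 < l" "c \<in> C" "norm (v - l *\<^sub>R c) < l * r"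
  shows "thickened_gauge C r v \<le> l"
  unfolding thickened_gauge_def using assms by (intro cInf_lower) (auto intro: bdd_belowI[of _ 0])

lemma thickened_gauge_greatest:
  assumes "\<And>l c. 0 < l \<Longrightarrow> c \<in> C \<Longrightarrow> norm (v - l *\<^sub>R c) < l * r \<Longrightarrow> m \<le> l"
  shows "m \<le> thickened_gauge C r v"
proof -
  have "0 < norm v / r + 1" "norm (v - (norm v / r + 1) *\<^sub>R 0) < (norm v / r + 1) * r"
    using r by (simp_all add: field_simps add_pos_nonneg)
  then have "norm v / r + 1 \<in> {l. 0 < l \<and> (\<exists>c\<in>C. norm (v - l *\<^sub>R c) < l * r)}"
    using C0 by blast
  then show ?thesis
    unfolding thickened_gauge_def using assms by (intro cInf_greatest) auto
qed

lemma thickened_gauge_le_norm: "thickened_gauge C r v \<le> norm v / r"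
proof (rule field_le_epsilon)
  fix e :: real assume "0 < e"
  then show "thickened_gauge C r v \<le> norm v / r + e"
    using C0 r by (intro thickened_gauge_le[of _ 0]) (auto simp: field_simps add_nonneg_pos)
qed

lemma thickened_gauge_nonneg: "0 \<le> thickened_gauge C r v"
  by (rule thickened_gauge_greatest) simp

lemma thickened_gauge_le_one: "c \<in> C \<Longrightarrow> thickened_gauge C r c \<le> 1"
  using r by (intro thickened_gauge_le[of 1 c]) auto

lemma one_le_thickened_gauge:
  assumes balanced: "\<And>c t. c \<in> C \<Longrightarrow> 0 < t \<Longrightarrow> t < 1 \<Longrightarrow> t *\<^sub>R c \<in> C"
    and far: "\<And>c. c \<in> C \<Longrightarrow> r \<le> norm (x - c)"
  shows "1 \<le> thickened_gauge C r x"
proof (rule thickened_gauge_greatest, rule ccontr)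
  fix l c assume "0 < l" "c \<in> C" "norm (x - l *\<^sub>R c) < l * r" "\<not> 1 \<le> l"
  then have "l *\<^sub>R c \<in> C" "l * r < r" using balanced r by auto
  then show False using far \<open>norm (x - l *\<^sub>R c) < l * r\<close> by fastforce
qed

lemma thickened_gauge_scaleR_le:
  assumes "0 < t"
  shows "thickened_gauge C r (t *\<^sub>R v) \<le> t * thickened_gauge C r v"
proof -
  have "thickened_gauge C r (t *\<^sub>R v) / t \<le> thickened_gauge C r v"
  proof (rule thickened_gauge_greatest)
    fix l c assume l: "0 < l" "c \<in> C" "norm (v - l *\<^sub>R c) < l * r"
    have "norm (t *\<^sub>R v - (t * l) *\<^sub>R c) = t * norm (v - l *\<^sub>R c)"
      using assms by (simp flip: scaleR_diff_right scaleR_scaleR)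
    also have "\<dots> < (t * l) * r" using assms l by simp
    finally have "thickened_gauge C r (t *\<^sub>R v) \<le> t * l"
      using assms l by (intro thickened_gauge_le) auto
    then show "thickened_gauge C r (t *\<^sub>R v) / t \<le> l"
      using assms by (simp add: divide_le_eq mult.commute)
  qed
  then show ?thesis using assms by (simp add: divide_le_eq mult.commute)
qed

lemma sublinear_thickened_gauge:
  assumes "convex C"
  shows "sublinear (thickened_gauge C r)"
  unfolding sublinear_def
proof (intro conjI allI impI)
  fix t :: real and u :: 'x assume "0 \<le> t"
  show "thickened_gauge C r (t *\<^sub>R u) = t * thickened_gauge C r u"
  proof (cases "t = 0")
    case True
    then show ?thesis
      using thickened_gauge_nonneg[of 0] thickened_gauge_le_norm[of 0] by simp
  next
    case False
    with \<open>0 \<le> t\<close> have t: "0 < t" by simp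
    have "thickened_gauge C r u \<le> inverse t * thickened_gauge C r (t *\<^sub>R u)"
      using thickened_gauge_scaleR_le[of "inverse t" "t *\<^sub>R u"] t by simp
    then show ?thesis
      using thickened_gauge_scaleR_le[OF t, of u] t by (simp add: field_simps)
  qed
next
  fix u v :: 'x
  text \<open>If \<open>u \<in> l (C + B\<^sub>r)\<close> and \<open>v \<in> m (C + B\<^sub>r)\<close> then \<open>u + v \<in> (l + m) (C + B\<^sub>r)\<close>,
    the point of \<open>C\<close> being the convex combination of the two.\<close>
  have sum_le: "thickened_gauge C r (u + v) \<le> l + m"
    if l: "0 < l" "c \<in> C" "norm (u - l *\<^sub>R c) < l * r"
      and m: "0 < m" "d \<in> C" "norm (v - m *\<^sub>R d) < m * r" for l m c d
  proof (rule thickened_gauge_le)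
    show "(l / (l + m)) *\<^sub>R c + (m / (l + m)) *\<^sub>R d \<in> C"
      using l m by (intro convexD[OF assms]) (auto simp: add_divide_distrib[symmetric])
    have "(l + m) *\<^sub>R ((l / (l + m)) *\<^sub>R c + (m / (l + m)) *\<^sub>R d) = l *\<^sub>R c + m *\<^sub>R d"
      using l m by (simp add: scaleR_add_right)
    then have "u + v - (l + m) *\<^sub>R ((l / (l + m)) *\<^sub>R c + (m / (l + m)) *\<^sub>R d)
        = (u - l *\<^sub>R c) + (v - m *\<^sub>R d)"
      by (simp add: algebra_simps)
    then have "norm (u + v - (l + m) *\<^sub>R ((l / (l + m)) *\<^sub>R c + (m / (l + m)) *\<^sub>R d))
        \<le> norm (u - l *\<^sub>R c) + norm (v - m *\<^sub>R d)"
      using norm_triangle_ineq[of "u - l *\<^sub>R c" "v - m *\<^sub>R d"] by (simp only:)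
    then show "norm (u + v - (l + m) *\<^sub>R ((l / (l + m)) *\<^sub>R c + (m / (l + m)) *\<^sub>R d)) < (l + m) * r"
      using l(3) m(3) distrib_right[of l m r] by linarith
  qed (use l m in simp)
  have "thickened_gauge C r (u + v) - thickened_gauge C r v \<le> thickened_gauge C r u"
  proof (rule thickened_gauge_greatest)
    fix l c assume l: "0 < l" "c \<in> C" "norm (u - l *\<^sub>R c) < l * r"
    have "thickened_gauge C r (u + v) - l \<le> thickened_gauge C r v"
      using sum_le[OF l] by (intro thickened_gauge_greatest) force
    then show "thickened_gauge C r (u + v) - thickened_gauge C r v \<le> l" by simp
  qed
  then show "thickened_gauge C r (u + v) \<le> thickened_gauge C r u + thickened_gauge C r v"
    by simp
qed

end

lemma absolutely_convexD: "absolutely_convex C \<Longrightarrow> c \<in> C \<Longrightarrow> \<bar>t\<bar> \<le> 1 \<Longrightarrow> t *\<^sub>R c \<in> C"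
  unfolding absolutely_convex_def by blast

lemma absolutely_convex_zero:
  assumes "absolutely_convex C" "C \<noteq> {}"
  shows "0 \<in> C"
proof -
  obtain c where "c \<in> C" using assms(2) by blast
  then show ?thesis using absolutely_convexD[OF assms(1), of c 0] by simp
qed

lemma absolutely_convex_uminus: "absolutely_convex C \<Longrightarrow> c \<in> C \<Longrightarrow> - c \<in> C"
  using absolutely_convexD[of C c "- 1"] by simp

lemma absolutely_convex_Inter: "(\<And>C. C \<in> T \<Longrightarrow> absolutely_convex C) \<Longrightarrow> absolutely_convex (\<Inter>T)"
  unfolding absolutely_convex_def by (auto intro: convex_Inter)

lemma absolutely_convex_closure:
  fixes C :: "'x::real_normed_vector set"
  assumes "absolutely_convex C"
  shows "absolutely_convex (closure C)"
  unfolding absolutely_convex_def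
proof (intro conjI ballI allI impI)
  show "convex (closure C)"
    using assms unfolding absolutely_convex_def by (intro convex_closure) simp
next
  fix x t assume "x \<in> closure C" "\<bar>t\<bar> \<le> (1::real)"
  then have "t *\<^sub>R x \<in> (*\<^sub>R) t ` closure C" by blast
  also have "\<dots> = closure ((*\<^sub>R) t ` C)" by (rule closure_scaleR)
  also have "\<dots> \<subseteq> closure C"
    using assms \<open>\<bar>t\<bar> \<le> 1\<close> unfolding absolutely_convex_def by (intro closure_mono) auto
  finally show "t *\<^sub>R x \<in> closure C" .
qed

lemma absolutely_convex_closed_aco: "absolutely_convex (closed_aco A)"
  unfolding closed_aco_def
  by (rule absolutely_convex_closure, rule hull_in, rule absolutely_convex_Inter) simp

lemma subset_closed_aco: "A \<subseteq> closed_aco A"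
  unfolding closed_aco_def by (rule order_trans[OF hull_subset closure_subset])

lemma closed_closed_aco: "closed (closed_aco A)"
  unfolding closed_aco_def by simp

theorem absolutely_convex_separation:
  fixes D :: "'x::real_normed_vector set"
  assumes D: "absolutely_convex D" "closed D" "D \<noteq> {}" and x: "x \<notin> D"
  obtains f :: "'x \<Rightarrow>\<^sub>L real" where "1 \<le> f x" "\<And>c. c \<in> D \<Longrightarrow> \<bar>f c\<bar> \<le> 1"
proof -
  define r where "r = infdist x D"
  have r: "0 < r" unfolding r_def using infdist_pos_not_in_closed[OF D(2,3) x] .
  have D0: "0 \<in> D" using absolutely_convex_zero D(1,3) by blast
  have "sublinear (thickened_gauge D r)"
    using D(1) unfolding absolutely_convex_def by (intro sublinear_thickened_gauge[OF D0 r]) simp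
  moreover have "thickened_gauge D r u \<le> (1 / r) * norm u" for u
    using thickened_gauge_le_norm[OF D0 r] by simp
  ultimately obtain g where g: "bounded_linear g" "\<And>v. g v \<le> thickened_gauge D r v"
    "g x = thickened_gauge D r x"
    by (rule hahn_banach_sublinear[where x = x]) blast
  interpret g: bounded_linear g by (rule g(1))
  show ?thesis
  proof (rule that[of "Blinfun g"])
    have "1 \<le> thickened_gauge D r x"
    proof (rule one_le_thickened_gauge[OF D0 r])
      show "t *\<^sub>R c \<in> D" if "c \<in> D" "0 < t" "t < 1" for c t
        using absolutely_convexD[OF D(1) that(1), of t] that by simp
      show "r \<le> norm (x - c)" if "c \<in> D" for c
        using infdist_le[OF that, of x] by (simp add: r_def dist_norm)
    qed
    then show "1 \<le> Blinfun g x" using g(1,3) by (simp add: bounded_linear_Blinfun_apply)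
  next
    fix c assume "c \<in> D"
    then have "g c \<le> 1" "g (- c) \<le> 1"
      using g(2)[of c] g(2)[of "- c"] thickened_gauge_le_one[OF D0 r]
        absolutely_convex_uminus[OF D(1) \<open>c \<in> D\<close>] by fastforce+
    then show "\<bar>Blinfun g c\<bar> \<le> 1" using g(1) by (simp add: bounded_linear_Blinfun_apply g.neg)
  qed
qed

section \<open>Support functions under the density representation\<close>

lemma abs_integral_indicator_mult_le:
  fixes \<theta> :: "'a \<Rightarrow> real"
  assumes \<theta>: "\<theta> \<in> borel_measurable \<mu>" "\<And>\<omega>. \<omega> \<in> space \<mu> \<Longrightarrow> \<bar>\<theta> \<omega>\<bar> \<le> c"
    and E: "E \<in> sets \<mu>" "emeasure \<mu> E \<le> ennreal \<tau>"
    and "0 \<le> c" "0 \<le> \<tau>"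
  shows "\<bar>\<integral>\<omega>. indicator E \<omega> * \<theta> \<omega> \<partial>\<mu>\<bar> \<le> c * \<tau>"
proof -
  have "(\<integral>\<^sup>+\<omega>. ennreal \<bar>indicator E \<omega> * \<theta> \<omega>\<bar> \<partial>\<mu>) \<le> (\<integral>\<^sup>+\<omega>. ennreal c * indicator E \<omega> \<partial>\<mu>)"
    using \<theta>(2) by (intro nn_integral_mono) (auto simp: indicator_def intro: ennreal_leI)
  also have "\<dots> = ennreal c * emeasure \<mu> E"
    using E(1) by (rule nn_integral_cmult_indicator)
  also have "\<dots> \<le> ennreal (c * \<tau>)"
    using E(2) assms(5,6) by (simp add: ennreal_mult mult_left_mono)
  finally have le: "(\<integral>\<^sup>+\<omega>. ennreal \<bar>indicator E \<omega> * \<theta> \<omega>\<bar> \<partial>\<mu>) \<le> ennreal (c * \<tau>)" .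
  have "\<bar>\<integral>\<omega>. indicator E \<omega> * \<theta> \<omega> \<partial>\<mu>\<bar> \<le> (\<integral>\<omega>. \<bar>indicator E \<omega> * \<theta> \<omega>\<bar> \<partial>\<mu>)"
    by (rule integral_abs_bound)
  also have "\<dots> = enn2real (\<integral>\<^sup>+\<omega>. ennreal \<bar>indicator E \<omega> * \<theta> \<omega>\<bar> \<partial>\<mu>)"
    using \<theta>(1) E(1) by (intro integral_eq_nn_integral) auto
  also have "\<dots> \<le> c * \<tau>"
    using enn2real_mono[OF le] assms(5,6) by simp
  finally show ?thesis .
qed

lemma abs_signed_integral_le:
  fixes \<theta> :: "'a \<Rightarrow> real"
  assumes \<theta>: "\<theta> \<in> borel_measurable S" "\<And>\<omega>. \<omega> \<in> space S \<Longrightarrow> \<bar>\<theta> \<omega>\<bar> \<le> c" "0 \<le> c"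
    and E: "E \<in> sets S"
    and \<nu>: "\<And>F. F \<in> sets S \<Longrightarrow> F \<subseteq> E \<Longrightarrow> \<bar>\<nu> F\<bar> \<le> \<tau>"
  shows "\<bar>signed_integral S \<nu> E \<theta>\<bar> \<le> 2 * c * \<tau>"
proof -
  have \<tau>: "0 \<le> \<tau>" using \<nu>[OF E] by simp
  have int_le: "\<bar>\<integral>\<omega>. indicator E \<omega> * \<theta> \<omega> \<partial>(measure_of (space S) (sets S) (\<lambda>A. ennreal (V A)))\<bar> \<le> c * \<tau>"
    if "V E \<le> \<tau>" for V
  proof (rule abs_integral_indicator_mult_le[OF _ _ _ _ \<theta>(3) \<tau>])
    show "\<theta> \<in> borel_measurable (measure_of (space S) (sets S) (\<lambda>A. ennreal (V A)))"
      using \<theta>(1) by (simp add: measurable_def space_measure_of_conv)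
    show "\<bar>\<theta> \<omega>\<bar> \<le> c" if "\<omega> \<in> space (measure_of (space S) (sets S) (\<lambda>A. ennreal (V A)))" for \<omega>
      using \<theta>(2) that by (simp add: space_measure_of_conv)
    show "E \<in> sets (measure_of (space S) (sets S) (\<lambda>A. ennreal (V A)))" using E by simp
    have "emeasure (measure_of (space S) (sets S) (\<lambda>A. ennreal (V A))) E \<le> ennreal (V E)"
      by (simp add: emeasure_measure_of_conv)
    also have "\<dots> \<le> ennreal \<tau>" using that by (rule ennreal_leI)
    finally show "emeasure (measure_of (space S) (sets S) (\<lambda>A. ennreal (V A))) E \<le> ennreal \<tau>" .
  qed
  have "pos_var S \<nu> E \<le> \<tau>" "neg_var S \<nu> E \<le> \<tau>"
    unfolding pos_var_def neg_var_def using E \<nu> by (auto intro!: cSUP_least simp: abs_le_iff)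
  then show ?thesis
    using int_le[of "pos_var S \<nu>"] int_le[of "neg_var S \<nu>"] unfolding signed_integral_def
    by (simp add: abs_le_iff)
qed

lemma abs_supp_fun_le:
  assumes "C \<noteq> {}" "\<And>z. z \<in> C \<Longrightarrow> \<bar>blinfun_apply x' z\<bar> \<le> \<tau>"
  shows "\<bar>supp_fun x' C\<bar> \<le> \<tau>"
proof -
  obtain z where z: "z \<in> C" using assms(1) by blast
  have "bdd_above (blinfun_apply x' ` C)"
    using assms(2) by (intro bdd_aboveI2[of _ _ \<tau>]) (simp add: abs_le_iff)
  then have "blinfun_apply x' z \<le> supp_fun x' C"
    unfolding supp_fun_def using z by (rule cSUP_upper2) simp
  moreover have "supp_fun x' C \<le> \<tau>"
    unfolding supp_fun_def using assms by (intro cSUP_least) (auto simp: abs_le_iff)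
  ultimately show ?thesis using assms(2)[OF z] by (simp add: abs_le_iff)
qed

lemma blinfun_le_supp_fun:
  assumes "bounded C" "x \<in> C"
  shows "blinfun_apply x' x \<le> supp_fun x' C"
proof -
  obtain B where B: "\<And>z. z \<in> C \<Longrightarrow> norm z \<le> B" using assms(1) unfolding bounded_iff by blast
  have "blinfun_apply x' z \<le> norm x' * B" if "z \<in> C" for z
  proof -
    have "blinfun_apply x' z \<le> norm x' * norm z"
      using norm_blinfun[of x' z] by simp
    also have "\<dots> \<le> norm x' * B" using B[OF that] by (intro mult_left_mono) auto
    finally show ?thesis .
  qed
  then show ?thesis
    unfolding supp_fun_def using assms(2) by (intro cSUP_upper bdd_aboveI2) auto
qed

lemma evaluation_in_linf_dual:
  fixes x' :: "'x::real_normed_vector \<Rightarrow>\<^sub>L real"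
  shows "(\<lambda>h. h x') \<in> linf_dual"
  unfolding linf_dual_def
proof (intro CollectI conjI ballI allI exI[of _ 1])
  fix h :: "('x \<Rightarrow>\<^sub>L real) \<Rightarrow> real" assume "h \<in> linf_ball"
  then obtain B where "\<And>v. \<bar>h v\<bar> \<le> B" unfolding linf_ball_def bounded_real by blast
  then have "\<bar>h x'\<bar> \<le> (SUP v. \<bar>h v\<bar>)" by (intro cSUP_upper bdd_aboveI2) auto
  then show "\<bar>h x'\<bar> \<le> 1 * (SUP v. \<bar>h v\<bar>)" by simp
qed simp_all

lemma supp_fun_le_of_density:
  assumes rep: "\<forall>E\<in>sets S. \<forall>y\<in>linf_dual.
      y (radstroem (M E)) = signed_integral S (\<lambda>F. y (radstroem (N F))) E \<theta>"
    and \<theta>: "\<theta> \<in> borel_measurable S" "\<And>\<omega>. \<omega> \<in> space S \<Longrightarrow> \<bar>\<theta> \<omega>\<bar> \<le> c" "0 \<le> c"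
    and N: "\<And>F. F \<in> sets S \<Longrightarrow> N F \<noteq> {}"
    and E: "E \<in> sets S"
    and x': "norm x' \<le> 1" "\<And>z. z \<in> range_on S N E \<Longrightarrow> \<bar>blinfun_apply x' z\<bar> \<le> \<tau>"
  shows "supp_fun x' (M E) \<le> 2 * c * \<tau>"
proof -
  have "\<forall>y\<in>linf_dual. y (radstroem (M E)) = signed_integral S (\<lambda>F. y (radstroem (N F))) E \<theta>"
    using rep E by blast
  from bspec[OF this evaluation_in_linf_dual[of x']]
  have "radstroem (M E) x' = signed_integral S (\<lambda>F. radstroem (N F) x') E \<theta>" .
  then have "supp_fun x' (M E) = signed_integral S (\<lambda>F. supp_fun x' (N F)) E \<theta>"
    using x'(1) by (simp add: radstroem_def)
  also have "\<dots> \<le> 2 * c * \<tau>"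
  proof (rule abs_le_D1, rule abs_signed_integral_le[OF \<theta> E])
    fix F assume "F \<in> sets S" "F \<subseteq> E"
    then show "\<bar>supp_fun x' (N F)\<bar> \<le> \<tau>"
      using N x'(2) by (intro abs_supp_fun_le) (auto simp: range_on_def)
  qed
  finally show ?thesis .
qed

lemma blinfun_le_of_density:
  assumes rep: "\<forall>E\<in>sets S. \<forall>y\<in>linf_dual.
      y (radstroem (M E)) = signed_integral S (\<lambda>F. y (radstroem (N F))) E \<theta>"
    and \<theta>: "\<theta> \<in> borel_measurable S" "\<And>\<omega>. \<omega> \<in> space S \<Longrightarrow> \<bar>\<theta> \<omega>\<bar> \<le> c" "0 \<le> c"
    and N: "\<And>F. F \<in> sets S \<Longrightarrow> N F \<noteq> {}"
    and E: "E \<in> sets S" and M: "bounded (M E)" "x \<in> M E"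
    and f: "\<And>z. z \<in> range_on S N E \<Longrightarrow> \<bar>blinfun_apply f z\<bar> \<le> \<tau>"
  shows "blinfun_apply f x \<le> 2 * c * \<tau>"
proof (cases "f = 0")
  case True
  obtain z where "z \<in> N E" using N[OF E] by blast
  then have "0 \<le> \<tau>" using f[of z] E by (force simp: range_on_def)
  then show ?thesis using True \<theta>(3) by simp
next
  case False
  define x' where "x' = (1 / norm f) *\<^sub>R f"
  have x': "norm x' \<le> 1" "blinfun_apply x' z = blinfun_apply f z / norm f" for z
    using False by (simp_all add: x'_def scaleR_blinfun.rep_eq)
  have "blinfun_apply x' x \<le> supp_fun x' (M E)"
    using blinfun_le_supp_fun[OF M] .
  also have "\<dots> \<le> 2 * c * (\<tau> / norm f)"
  proof (rule supp_fun_le_of_density[OF rep \<theta> N E x'(1)])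
    fix z assume "z \<in> range_on S N E"
    then show "\<bar>blinfun_apply x' z\<bar> \<le> \<tau> / norm f"
      using f divide_right_mono[of _ \<tau> "norm f"] by (simp add: x'(2) abs_divide)
  qed
  finally show ?thesis using False by (simp add: x'(2) divide_le_cancel)
qed

lemma mem_scaleR_closed_aco_of_density:
  fixes x :: "'x::real_normed_vector"
  assumes rep: "\<forall>E\<in>sets S. \<forall>y\<in>linf_dual.
      y (radstroem (M E)) = signed_integral S (\<lambda>F. y (radstroem (N F))) E \<theta>"
    and \<theta>: "\<theta> \<in> borel_measurable S" "\<And>\<omega>. \<omega> \<in> space S \<Longrightarrow> \<bar>\<theta> \<omega>\<bar> \<le> c" "0 \<le> c"
    and N: "\<And>F. F \<in> sets S \<Longrightarrow> N F \<noteq> {}"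
    and E: "E \<in> sets S" and M: "bounded (M E)" "x \<in> M E"
    and R: "range_on S N E \<subseteq> R"
  shows "x \<in> (\<lambda>x. (2 * c + 1) *\<^sub>R x) ` closed_aco R"
proof (rule ccontr)
  define d where "d = 2 * c + 1"
  have d: "0 < d" using \<theta>(3) by (simp add: d_def)
  assume "x \<notin> (\<lambda>x. (2 * c + 1) *\<^sub>R x) ` closed_aco R"
  moreover have "x = d *\<^sub>R ((1 / d) *\<^sub>R x)" using d by simp
  ultimately have "(1 / d) *\<^sub>R x \<notin> closed_aco R" unfolding d_def by blast
  have NR: "range_on S N E \<subseteq> closed_aco R"
    using R subset_closed_aco[of R] by blast
  then have "closed_aco R \<noteq> {}"
    using N[OF E] E unfolding range_on_def by blast
  then obtain f :: "'x \<Rightarrow>\<^sub>L real"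
    where f: "1 \<le> f ((1 / d) *\<^sub>R x)" "\<And>z. z \<in> closed_aco R \<Longrightarrow> \<bar>f z\<bar> \<le> 1"
    using \<open>(1 / d) *\<^sub>R x \<notin> closed_aco R\<close>
    by (rule absolutely_convex_separation[OF absolutely_convex_closed_aco closed_closed_aco]) blast
  have "f x \<le> 2 * c * 1"
    using NR f(2) by (intro blinfun_le_of_density[OF rep \<theta> N E M]) auto
  moreover have "d \<le> f x"
    using f(1) d by (simp add: blinfun.scaleR_right field_simps)
  ultimately show False by (simp add: d_def)
qed

theorem mainTheorem15:
  fixes S :: "'a measure"
    and M N :: "'a set \<Rightarrow> 'x::banach set"
    and \<theta> :: "'a \<Rightarrow> real"
  assumes "dH_multimeasure S M"
    and "dH_multimeasure S N"
    and "\<theta> \<in> borel_measurable S"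
    and "bounded (\<theta> ` space S)"
    and "\<forall>E\<in>sets S. \<forall>y\<in>linf_dual.
           y (radstroem (M E)) = signed_integral S (\<lambda>F. y (radstroem (N F))) E \<theta>"
  shows "\<exists>d>0. \<forall>E\<in>sets S.
           M E \<subseteq> (\<lambda>x. d *\<^sub>R x) ` closed_aco (range_on S N E \<union> range_on S (neg_mm N) E)"
proof -
  obtain a where "\<And>\<omega>. \<omega> \<in> space S \<Longrightarrow> \<bar>\<theta> \<omega>\<bar> \<le> a"
    using assms(4) unfolding bounded_real by blast
  then obtain c where c: "\<And>\<omega>. \<omega> \<in> space S \<Longrightarrow> \<bar>\<theta> \<omega>\<bar> \<le> c" "0 \<le> c"
    by (meson max.cobounded1 max.cobounded2 order_trans)
  have M_bounded: "bounded (M E)" and N_nonempty: "N E \<noteq> {}" if "E \<in> sets S" for E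
    using assms(1,2) that unfolding dH_multimeasure_def cb_def by auto
  have "M E \<subseteq> (\<lambda>x. (2 * c + 1) *\<^sub>R x) ` closed_aco (range_on S N E \<union> range_on S (neg_mm N) E)"
    if "E \<in> sets S" for E
    using mem_scaleR_closed_aco_of_density[OF assms(5,3) c N_nonempty that M_bounded[OF that]]
    by blast
  moreover have "0 < 2 * c + 1" using c(2) by simp
  ultimately show ?thesis by blast
qed

end
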